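(* Let $D\subset(0,\infty)\times\mathbb{R}$ be a nonempty open convex set of points $(v,s)$, and let $u\in C^2(D)$ with $u_s(v,s)>0$ for all $(v,s)\in D$. Define $e(v,s,\mathbf v)=u(v,s)+\tfrac12|\mathbf v|^2$ for $(v,s)\in D$, $\mathbf v\in\mathbb{R}^3$, and let $D_s=\{(v,e(v,s,\mathbf v),\mathbf v):(v,s)\in D,\ \mathbf v\in\mathbb{R}^3\}$. Let $s(v,\varepsilon,\mathbf v)$ for $(v,\varepsilon,\mathbf v)\in D_s$ be the unique value with $(v,s(v,\varepsilon,\mathbf v))\in D$ and $e(v,s(v,\varepsilon,\mathbf v),\mathbf v)=\varepsilon$. Let $\Omega=\{(\rho,\bar M,\bar E)\in(0,\infty)\times\mathbb{R}^3\times\mathbb{R}:(1/\rho,\bar E/\rho,\bar M/\rho)\in D_s\}$ and define the entropy density $$\bar S(\rho,\bar M,\bar E)=\rho\, s\!\left(\tfrac1\rho,\tfrac{\bar E}{\rho},\tfrac{\bar M}{\rho}\right),\qquad(\rho,\bar M,\bar E)\in\Omega.$$ Then: (i) the Hessian of $u$ with respect to $(v,s)$ is positive definite at every point of $D$ if and only if the $5\times5$ Hessian of $\bar S$ with respect to $(\rho,\bar M,\bar E)$ is negative definite at every point of $\Omega$; (ii) if $D_s$ is convex, then $u$ is strictly convex on $D$ if and only if $\bar S$ is strictly concave on $\Omega$ (and $u$ is convex on $D$ iff $\bar S$ is concave on $\Omega$).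
   Context: $u(v,s)$ is a specific internal energy in specific volume $v$ and specific entropy $s$; $u_s=\theta>0$ is the temperature. $(\rho,\bar M,\bar E)$ are the conserved variables of the Euler equations: mass density, momentum density and total energy density. Strict concavity means $-\bar S$ is strictly convex. *)

theory Defs
  imports "HOL-Analysis.Analysis"
begin

definition frechet_D :: "('a::real_normed_vector \<Rightarrow> real) \<Rightarrow> 'a \<Rightarrow> ('a \<Rightarrow>\<^sub>L real)" where
  "frechet_D f x = (THE L. (f has_derivative blinfun_apply L) (at x))"

definition hess :: "('a::real_normed_vector \<Rightarrow> real) \<Rightarrow> 'a \<Rightarrow> ('a \<Rightarrow>\<^sub>L ('a \<Rightarrow>\<^sub>L real))" where
  "hess f x = (THE L. ((\<lambda>y. frechet_D f y) has_derivative blinfun_apply L) (at x))"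

definition C2_on :: "'a::real_normed_vector set \<Rightarrow> ('a \<Rightarrow> real) \<Rightarrow> bool" where
  "C2_on S f \<longleftrightarrow>
     (\<forall>x\<in>S. (f has_derivative blinfun_apply (frechet_D f x)) (at x)) \<and>
     (\<forall>x\<in>S. ((\<lambda>y. frechet_D f y) has_derivative blinfun_apply (hess f x)) (at x)) \<and>
     continuous_on S (hess f)"

definition hess_pos_def :: "('a::real_normed_vector \<Rightarrow> real) \<Rightarrow> 'a \<Rightarrow> bool" where
  "hess_pos_def f x \<longleftrightarrow> (\<forall>h. h \<noteq> 0 \<longrightarrow> blinfun_apply (blinfun_apply (hess f x) h) h > 0)"

definition hess_neg_def :: "('a::real_normed_vector \<Rightarrow> real) \<Rightarrow> 'a \<Rightarrow> bool" where
  "hess_neg_def f x \<longleftrightarrow> (\<forall>h. h \<noteq> 0 \<longrightarrow> blinfun_apply (blinfun_apply (hess f x) h) h < 0)"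

definition strict_convex_on :: "'a::real_vector set \<Rightarrow> ('a \<Rightarrow> real) \<Rightarrow> bool" where
  "strict_convex_on S f \<longleftrightarrow> convex S \<and>
    (\<forall>x\<in>S. \<forall>y\<in>S. \<forall>t. x \<noteq> y \<and> 0 < t \<and> t < 1 \<longrightarrow>
        f ((1 - t) *\<^sub>R x + t *\<^sub>R y) < (1 - t) * f x + t * f y)"

definition strict_concave_on :: "'a::real_vector set \<Rightarrow> ('a \<Rightarrow> real) \<Rightarrow> bool" where
  "strict_concave_on S f \<longleftrightarrow> strict_convex_on S (\<lambda>x. - f x)"

definition energy :: "(real \<times> real \<Rightarrow> real) \<Rightarrow> real \<Rightarrow> real \<Rightarrow> real^3 \<Rightarrow> real" where
  "energy u v s w = u (v, s) + norm w ^ 2 / 2"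

definition Ds :: "(real \<times> real) set \<Rightarrow> (real \<times> real \<Rightarrow> real) \<Rightarrow> (real \<times> real \<times> (real^3)) set" where
  "Ds D u = {(v, energy u v s w, w) | v s w. (v, s) \<in> D}"

definition sfun :: "(real \<times> real) set \<Rightarrow> (real \<times> real \<Rightarrow> real) \<Rightarrow> real \<Rightarrow> real \<Rightarrow> real^3 \<Rightarrow> real" where
  "sfun D u v eps w = (THE s. (v, s) \<in> D \<and> energy u v s w = eps)"

definition Omega :: "(real \<times> real) set \<Rightarrow> (real \<times> real \<Rightarrow> real) \<Rightarrow> (real \<times> (real^3) \<times> real) set" where
  "Omega D u = {(rho, M, E) | rho M E. rho > 0 \<and> (1 / rho, E / rho, (1 / rho) *\<^sub>R M) \<in> Ds D u}"

definition Sbar :: "(real \<times> real) set \<Rightarrow> (real \<times> real \<Rightarrow> real) \<Rightarrow> real \<times> (real^3) \<times> real \<Rightarrow> real" where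
  "Sbar D u = (\<lambda>(rho, M, E). rho * sfun D u (1 / rho) (E / rho) ((1 / rho) *\<^sub>R M))"

end

theory Submission
  imports Defs
begin

text \<open>
  In the variables \<open>x = (\<rho>, M, S)\<close>, with \<open>S = \<rho> s\<close> the entropy density, the total energy
  density is \<open>E(x) = \<rho> u(1/\<rho>, S/\<rho>) + |M|\<^sup>2/(2\<rho>)\<close>: the perspective of \<open>u\<close> (composed with the
  affine map \<open>x \<mapsto> (\<rho>, (1, S))\<close>) plus half the perspective of \<open>|.|\<^sup>2\<close>. Since \<open>u\<^sub>s > 0\<close>, \<open>E\<close> is
  strictly increasing in \<open>S\<close>, so \<open>(\<rho>, M, S) \<mapsto> (\<rho>, M, E(x))\<close> is a bijection onto \<open>\<Omega>\<close> with inverse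
  \<open>(\<rho>, M, E) \<mapsto> (\<rho>, M, Sbar(\<rho>, M, E))\<close>.

  (i) Differentiating \<open>Sbar(\<rho>, M, E(x)) = S\<close> twice gives \<open>D\<^sup>2Sbar[k, k] = - D\<^sup>2E[h, h] / \<partial>\<^sub>SE\<close>
  for tangent vectors \<open>h \<mapsto> k\<close> related by the (invertible) derivative of the bijection, and
  \<open>D\<^sup>2E[h, h] = \<rho> D\<^sup>2u[w, w] + |M' - (\<rho>'/\<rho>) M|\<^sup>2/\<rho>\<close> with \<open>w\<close> the derivative of
  \<open>(1/\<rho>, S/\<rho>)\<close> along \<open>h\<close>. Every \<open>w\<close> is attained with vanishing kinetic term, and \<open>w = 0\<close> forces
  \<open>\<rho>' = S' = 0\<close>, so \<open>D\<^sup>2E\<close> is positive definite iff \<open>D\<^sup>2u\<close> is.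

  (ii) A perspective is convex iff the function is, strictly so between points on different rays;
  the kinetic term is strictly convex between points on the same ray. Along a segment of \<open>\<Omega>\<close> the
  bijection moves only the \<open>S\<close>-coordinate of the corresponding segment of \<open>x\<close>'s, and monotonicity
  of \<open>E\<close> in \<open>S\<close> turns the convexity inequality of \<open>E\<close> into the concavity inequality of \<open>Sbar\<close>.
\<close>

section \<open>Second derivatives\<close>

definition has_second_derivative ::
  "('a::real_normed_vector \<Rightarrow> 'b::real_normed_vector) \<Rightarrow> ('a \<Rightarrow> 'a \<Rightarrow>\<^sub>L 'b) \<Rightarrow> ('a \<Rightarrow> 'a \<Rightarrow>\<^sub>L 'b) \<Rightarrow> 'a \<Rightarrow> bool"
  where "has_second_derivative f Df H x \<longleftrightarrow>
    (\<forall>\<^sub>F y in nhds x. (f has_derivative blinfun_apply (Df y)) (at y)) \<and> (Df has_derivative H) (at x)"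

lemma has_second_derivative_imp_has_derivative:
  "has_second_derivative f Df H x \<Longrightarrow> (f has_derivative blinfun_apply (Df x)) (at x)"
  unfolding has_second_derivative_def using eventually_nhds_x_imp_x by blast

lemma has_second_derivative_linear:
  "bounded_linear f \<Longrightarrow> has_second_derivative f (\<lambda>_. Blinfun f) (\<lambda>_. 0) x"
  unfolding has_second_derivative_def
  by (simp add: bounded_linear_Blinfun_apply bounded_linear_imp_has_derivative)

lemma has_second_derivative_add:
  assumes "has_second_derivative f Df Hf x" "has_second_derivative g Dg Hg x"
  shows "has_second_derivative (\<lambda>y. f y + g y) (\<lambda>y. Df y + Dg y) (\<lambda>k. Hf k + Hg k) x"
  using assms unfolding has_second_derivative_def
  by (auto intro!: has_derivative_add simp: plus_blinfun.rep_eq elim: eventually_elim2)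

lemma has_second_derivative_bilinear:
  assumes bb: "bounded_bilinear pr"
    and f: "has_second_derivative f Df Hf x" and g: "has_second_derivative g Dg Hg x"
  shows "has_second_derivative (\<lambda>y. pr (f y) (g y))
     (\<lambda>y. (bounded_bilinear.prod_left pr (g y) o\<^sub>L Df y) + (bounded_bilinear.prod_right pr (f y) o\<^sub>L Dg y))
     (\<lambda>k. ((bounded_bilinear.prod_left pr (g x) o\<^sub>L Hf k) + (bounded_bilinear.prod_left pr (Dg x k) o\<^sub>L Df x))
        + ((bounded_bilinear.prod_right pr (f x) o\<^sub>L Hg k) + (bounded_bilinear.prod_right pr (Df x k) o\<^sub>L Dg x))) x"
proof -
  interpret bounded_bilinear pr by fact
  have fd: "(f has_derivative blinfun_apply (Df x)) (at x)"
    and gd: "(g has_derivative blinfun_apply (Dg x)) (at x)"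
    using f g has_second_derivative_imp_has_derivative by blast+
  have near: "\<forall>\<^sub>F y in nhds x. ((\<lambda>y. pr (f y) (g y)) has_derivative
      blinfun_apply ((prod_left (g y) o\<^sub>L Df y) + (prod_right (f y) o\<^sub>L Dg y))) (at y)"
    using conjunct1[OF f[unfolded has_second_derivative_def]] conjunct1[OF g[unfolded has_second_derivative_def]]
  proof eventually_elim
    case (elim y)
    show ?case
      by (rule has_derivative_eq_rhs, rule FDERIV[OF elim(1) elim(2)])
         (simp add: fun_eq_iff plus_blinfun.rep_eq add.commute)
  qed
  have left: "((\<lambda>y. prod_left (g y)) has_derivative (\<lambda>k. prod_left (Dg x k))) (at x)"
    by (rule bounded_linear.has_derivative[OF bounded_linear_prod_left gd])
  have right: "((\<lambda>y. prod_right (f y)) has_derivative (\<lambda>k. prod_right (Df x k))) (at x)"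
    by (rule bounded_linear.has_derivative[OF bounded_linear_prod_right fd])
  have "(Df has_derivative Hf) (at x)" "(Dg has_derivative Hg) (at x)"
    using f g unfolding has_second_derivative_def by auto
  then have "((\<lambda>y. (prod_left (g y) o\<^sub>L Df y) + (prod_right (f y) o\<^sub>L Dg y)) has_derivative
     (\<lambda>k. ((prod_left (g x) o\<^sub>L Hf k) + (prod_left (Dg x k) o\<^sub>L Df x))
        + ((prod_right (f x) o\<^sub>L Hg k) + (prod_right (Df x k) o\<^sub>L Dg x)))) (at x)"
    by (intro has_derivative_add bounded_bilinear.FDERIV[OF bounded_bilinear_blinfun_compose] left right)
  with near show ?thesis unfolding has_second_derivative_def by simp
qed

lemma has_second_derivative_compose:
  assumes g: "has_second_derivative g Dg Hg x" and f: "has_second_derivative f Df Hf (g x)"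
  shows "has_second_derivative (\<lambda>y. f (g y)) (\<lambda>y. Df (g y) o\<^sub>L Dg y)
     (\<lambda>k. (Hf (Dg x k) o\<^sub>L Dg x) + (Df (g x) o\<^sub>L Hg k)) x"
proof -
  have gd: "(g has_derivative blinfun_apply (Dg x)) (at x)"
    using g has_second_derivative_imp_has_derivative by blast
  then have "isCont g x" by (rule has_derivative_continuous)
  then have "filterlim g (nhds (g x)) (nhds x)"
    by (simp add: isCont_def tendsto_at_iff_tendsto_nhds)
  then have "\<forall>\<^sub>F y in nhds x. (f has_derivative blinfun_apply (Df (g y))) (at (g y))"
    using f unfolding has_second_derivative_def filterlim_iff by blast
  then have near: "\<forall>\<^sub>F y in nhds x. ((\<lambda>y. f (g y)) has_derivative blinfun_apply (Df (g y) o\<^sub>L Dg y)) (at y)"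
    using conjunct1[OF g[unfolded has_second_derivative_def]]
  proof eventually_elim
    case (elim y)
    show ?case
      by (rule has_derivative_eq_rhs, rule has_derivative_compose[OF elim(2) elim(1)]) (simp add: fun_eq_iff)
  qed
  have DfH: "(Df has_derivative Hf) (at (g x))" and DgH: "(Dg has_derivative Hg) (at x)"
    using f g unfolding has_second_derivative_def by auto
  have "((\<lambda>y. Df (g y) o\<^sub>L Dg y) has_derivative (\<lambda>k. (Hf (Dg x k) o\<^sub>L Dg x) + (Df (g x) o\<^sub>L Hg k))) (at x)"
    by (rule has_derivative_eq_rhs, rule bounded_bilinear.FDERIV[OF bounded_bilinear_blinfun_compose
          has_derivative_compose[OF gd DfH] DgH]) (simp add: fun_eq_iff add.commute)
  with near show ?thesis unfolding has_second_derivative_def by simp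
qed

lemma has_second_derivative_inverse:
  assumes "(x::real) \<noteq> 0"
  shows "has_second_derivative inverse (\<lambda>y. (- (inverse y * inverse y)) *\<^sub>R id_blinfun)
    (\<lambda>k. (2 * k * inverse x ^ 3) *\<^sub>R id_blinfun) x"
  unfolding has_second_derivative_def
proof
  have "\<forall>\<^sub>F y in nhds x. y \<noteq> 0"
    using eventually_nhds_in_open[of "- {0}" x] assms by auto
  then show "\<forall>\<^sub>F y in nhds x. (inverse has_derivative blinfun_apply ((- (inverse y * inverse y)) *\<^sub>R id_blinfun)) (at y)"
    by eventually_elim
      (rule has_derivative_eq_rhs[OF has_derivative_inverse'],
       auto simp: fun_eq_iff uminus_blinfun.rep_eq scaleR_blinfun.rep_eq)
  have "((\<lambda>y. - (inverse y * inverse y)) has_derivative (\<lambda>k. 2 * k * inverse x ^ 3)) (at x)"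
    by (rule has_derivative_eq_rhs[OF has_derivative_minus[OF has_derivative_mult[OF
          has_derivative_inverse'[OF assms] has_derivative_inverse'[OF assms]]]])
      (simp add: fun_eq_iff power3_eq_cube algebra_simps)
  then show "((\<lambda>y. (- (inverse y * inverse y)) *\<^sub>R id_blinfun) has_derivative
      (\<lambda>k. (2 * k * inverse x ^ 3) *\<^sub>R id_blinfun)) (at x)"
    by (rule has_derivative_eq_rhs[OF has_derivative_scaleR[OF _ has_derivative_const]]) (simp add: fun_eq_iff)
qed

lemma has_second_derivative_Pair:
  fixes a b :: "'a::real_normed_vector \<Rightarrow> real"
  assumes "has_second_derivative a Da Ha x" "has_second_derivative b Db Hb x"
  shows "has_second_derivative (\<lambda>y. (a y, b y))
   (\<lambda>y. (Blinfun (\<lambda>r. (r, 0)) o\<^sub>L Da y) + (Blinfun (\<lambda>r. (0, r)) o\<^sub>L Db y))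
   (\<lambda>k. ((0 o\<^sub>L Da x) + (Blinfun (\<lambda>r. (r, 0)) o\<^sub>L Ha k)) + ((0 o\<^sub>L Db x) + (Blinfun (\<lambda>r. (0, r)) o\<^sub>L Hb k))) x"
proof -
  have "bounded_linear (\<lambda>r::real. (r, 0::real))" "bounded_linear (\<lambda>r::real. (0::real, r))"
    by (auto intro!: bounded_linear_Pair bounded_linear_ident bounded_linear_zero)
  from has_second_derivative_add[OF
      has_second_derivative_compose[OF assms(1) has_second_derivative_linear[OF this(1)]]
      has_second_derivative_compose[OF assms(2) has_second_derivative_linear[OF this(2)]]]
  show ?thesis by simp
qed

lemma frechet_D_eqI:
  assumes "(f has_derivative blinfun_apply L) (at y)"
  shows "frechet_D f y = L"
  unfolding frechet_D_def
proof (rule the_equality)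
  fix L' assume "(f has_derivative blinfun_apply L') (at y)"
  from has_derivative_unique[OF this assms] show "L' = L" by (simp add: blinfun_apply_inject)
qed (fact assms)

lemma has_second_derivative_frechet_D:
  assumes "has_second_derivative f Df H x"
  shows "has_second_derivative f (frechet_D f) H x"
proof -
  have near: "\<forall>\<^sub>F y in nhds x. (f has_derivative blinfun_apply (Df y)) (at y)"
    and DH: "(Df has_derivative H) (at x)"
    using assms unfolding has_second_derivative_def by auto
  from near have eq: "\<forall>\<^sub>F y in nhds x. frechet_D f y = Df y"
    by eventually_elim (rule frechet_D_eqI)
  have "(frechet_D f has_derivative H) (at x)"
  proof (rule has_derivative_transform_eventually[OF DH])
    show "\<forall>\<^sub>F y in at x within UNIV. Df y = frechet_D f y"
      using eq unfolding eventually_at_filter by eventually_elim simp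
    show "Df x = frechet_D f x" using eventually_nhds_x_imp_x[OF eq] by simp
  qed simp
  moreover have "\<forall>\<^sub>F y in nhds x. (f has_derivative blinfun_apply (frechet_D f y)) (at y)"
    using near eq by eventually_elim simp
  ultimately show ?thesis unfolding has_second_derivative_def by simp
qed

lemma hess_eqI:
  assumes "has_second_derivative f (frechet_D f) H x"
  shows "blinfun_apply (hess f x) = H"
proof -
  have DH: "(frechet_D f has_derivative H) (at x)"
    using assms unfolding has_second_derivative_def by auto
  then have lin: "bounded_linear H" by (rule has_derivative_bounded_linear)
  have "hess f x = Blinfun H"
    unfolding hess_def
  proof (rule the_equality)
    show "(frechet_D f has_derivative blinfun_apply (Blinfun H)) (at x)"
      using DH lin by (simp add: bounded_linear_Blinfun_apply)
    fix L assume "(frechet_D f has_derivative blinfun_apply L) (at x)"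
    from has_derivative_unique[OF this DH] lin show "L = Blinfun H"
      by (metis blinfun_apply_inverse)
  qed
  then show ?thesis using lin by (simp add: bounded_linear_Blinfun_apply)
qed

lemma C2_on_imp_has_second_derivative:
  assumes "C2_on S f" "open S" "x \<in> S"
  shows "has_second_derivative f (frechet_D f) (hess f x) x"
  using assms unfolding C2_on_def has_second_derivative_def by (auto simp: eventually_nhds)

lemma blinfun_apply_real_Pair:
  "blinfun_apply (L :: (real \<times> real) \<Rightarrow>\<^sub>L 'b::real_normed_vector) (a, b) = a *\<^sub>R L (1, 0) + b *\<^sub>R L (0, 1)"
proof -
  have "(a, b) = a *\<^sub>R (1, 0) + b *\<^sub>R (0::real, 1::real)" by simp
  then show ?thesis by (metis blinfun.add_right blinfun.scaleR_right)
qed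

lemma blinfun_apply_split_last:
  "blinfun_apply (L :: ('a::real_normed_vector \<times> 'c::real_normed_vector \<times> real) \<Rightarrow>\<^sub>L 'b::real_normed_vector) h
   = L (fst h, fst (snd h), 0) + snd (snd h) *\<^sub>R L (0, 0, 1)"
proof -
  have "h = (fst h, fst (snd h), 0) + snd (snd h) *\<^sub>R (0, 0, 1)" by simp
  then show ?thesis by (metis blinfun.add_right blinfun.scaleR_right)
qed

definition last_coord :: "('a::real_normed_vector \<times> 'c::real_normed_vector \<times> real) \<Rightarrow>\<^sub>L real"
  where "last_coord = Blinfun (\<lambda>h. snd (snd h))"

definition zero_last_coord :: "('a::real_normed_vector \<times> 'c::real_normed_vector \<times> real) \<Rightarrow>\<^sub>L ('a \<times> 'c \<times> real)"
  where "zero_last_coord = Blinfun (\<lambda>h. (fst h, fst (snd h), 0))"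

lemma last_coord_apply [simp]: "blinfun_apply last_coord h = snd (snd h)"
  unfolding last_coord_def
  by (simp add: bounded_linear_Blinfun_apply bounded_linear_compose[OF bounded_linear_snd bounded_linear_snd])

lemma zero_last_coord_apply [simp]: "blinfun_apply zero_last_coord h = (fst h, fst (snd h), 0)"
  unfolding zero_last_coord_def
  by (simp add: bounded_linear_Blinfun_apply bounded_linear_Pair bounded_linear_fst bounded_linear_zero
      bounded_linear_compose[OF bounded_linear_fst bounded_linear_snd])

lemma neg_def_iff_pos_def_transform:
  fixes Q :: "'a::zero \<Rightarrow> real" and P :: "'b::zero \<Rightarrow> real"
  assumes "\<And>h. g' (g h) = h" "\<And>k. g (g' k) = k" "g 0 = 0" "a > 0" "\<And>h. Q h = - P (g h) / a"
  shows "(\<forall>h. h \<noteq> 0 \<longrightarrow> Q h < 0) \<longleftrightarrow> (\<forall>k. k \<noteq> 0 \<longrightarrow> P k > 0)"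
proof -
  have zero_iff: "g h = 0 \<longleftrightarrow> h = 0" for h using assms(1,3) by metis
  have "Q h < 0 \<longleftrightarrow> P (g h) > 0" for h using assms(4,5) by (simp add: zero_less_divide_iff)
  with zero_iff assms(2) show ?thesis by metis
qed

section \<open>Convexity and perspectives\<close>

definition le_strict_if :: "bool \<Rightarrow> real \<Rightarrow> real \<Rightarrow> bool"
  where "le_strict_if b x y \<longleftrightarrow> (if b then x < y else x \<le> y)"

definition convex_on_strict_if :: "bool \<Rightarrow> 'a::real_vector set \<Rightarrow> ('a \<Rightarrow> real) \<Rightarrow> bool"
  where "convex_on_strict_if b S f \<longleftrightarrow> convex S \<and>
    (\<forall>x\<in>S. \<forall>y\<in>S. \<forall>t. 0 < t \<and> t < 1 \<and> (b \<longrightarrow> x \<noteq> y) \<longrightarrow>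
      le_strict_if b (f ((1 - t) *\<^sub>R x + t *\<^sub>R y)) ((1 - t) * f x + t * f y))"

lemma convex_on_strict_if_True: "convex_on_strict_if True S f \<longleftrightarrow> strict_convex_on S f"
  by (auto simp: convex_on_strict_if_def le_strict_if_def strict_convex_on_def)

lemma convex_on_strict_if_False: "convex_on_strict_if False S f \<longleftrightarrow> convex_on S f"
proof
  assume "convex_on_strict_if False S f"
  then show "convex_on S f" by (intro convex_onI) (auto simp: convex_on_strict_if_def le_strict_if_def)
next
  assume f: "convex_on S f"
  then have "convex S" by (simp add: convex_on_def)
  with convex_onD[OF f] show "convex_on_strict_if False S f" by (auto simp: convex_on_strict_if_def le_strict_if_def)
qed

lemma le_strict_if_add:
  "le_strict_if c x y \<Longrightarrow> le_strict_if c' x' y' \<Longrightarrow> (b \<longrightarrow> c \<or> c') \<Longrightarrow> le_strict_if b (x + x') (y + y')"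
  by (auto simp: le_strict_if_def split: if_splits)

lemma le_strict_if_mult_left_iff: "c > 0 \<Longrightarrow> le_strict_if b (c * x) (c * y) \<longleftrightarrow> le_strict_if b x y"
  by (auto simp: le_strict_if_def)

lemma le_strict_if_minus_iff: "le_strict_if b (- x) (- y) \<longleftrightarrow> le_strict_if b y x"
  by (auto simp: le_strict_if_def)

lemma convex_on_strict_if_inner_self: "convex_on_strict_if b UNIV (\<lambda>y::'a::real_inner. inner y y)"
  unfolding convex_on_strict_if_def
proof (intro conjI convex_UNIV ballI allI impI)
  fix x y :: 'a and t :: real assume t: "0 < t \<and> t < 1 \<and> (b \<longrightarrow> x \<noteq> y)"
  have "(1 - t) * inner x x + t * inner y y - inner ((1 - t) *\<^sub>R x + t *\<^sub>R y) ((1 - t) *\<^sub>R x + t *\<^sub>R y)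
      = (1 - t) * t * inner (x - y) (x - y)"
    by (simp add: inner_add inner_diff inner_commute[of y x] algebra_simps)
  moreover have "(1 - t) * t > 0" using t by simp
  moreover have "b \<Longrightarrow> inner (x - y) (x - y) > 0" using t by simp
  ultimately show "le_strict_if b (inner ((1 - t) *\<^sub>R x + t *\<^sub>R y) ((1 - t) *\<^sub>R x + t *\<^sub>R y)) ((1 - t) * inner x x + t * inner y y)"
    unfolding le_strict_if_def
    by (smt (verit, ccfv_SIG) inner_ge_zero mult_pos_pos mult_nonneg_nonneg)
qed

lemma perspective_weights:
  fixes r1 r2 t :: real
  assumes r1: "r1 > 0" and r2: "r2 > 0" and t: "0 \<le> t" "t \<le> 1"
  defines "r \<equiv> (1 - t) * r1 + t * r2"
  defines "m \<equiv> t * r2 / r"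
  shows "r > 0" "0 \<le> m" "m \<le> 1" "r * (1 - m) = (1 - t) * r1" "r * m = t * r2"
    "\<And>a1 a2 :: 'a::real_vector. (1 - m) *\<^sub>R ((1 / r1) *\<^sub>R a1) + m *\<^sub>R ((1 / r2) *\<^sub>R a2) = (1 / r) *\<^sub>R ((1 - t) *\<^sub>R a1 + t *\<^sub>R a2)"
    "0 < t \<Longrightarrow> t < 1 \<Longrightarrow> 0 < m \<and> m < 1"
proof -
  have "(1 - t) * r1 \<ge> 0" "t * r2 \<ge> 0" "t = 0 \<Longrightarrow> (1 - t) * r1 > 0" "t \<noteq> 0 \<Longrightarrow> t * r2 > 0"
    using r1 r2 t by auto
  then show rp: "r > 0" unfolding r_def by linarith
  show "0 \<le> m" unfolding m_def using rp r2 t by simp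
  show "m \<le> 1" unfolding m_def using rp r1 r2 t by (simp add: divide_le_eq r_def)
  show rm1: "r * (1 - m) = (1 - t) * r1" unfolding m_def using rp by (simp add: field_simps r_def)
  show rm: "r * m = t * r2" unfolding m_def using rp by simp
  show "0 < t \<Longrightarrow> t < 1 \<Longrightarrow> 0 < m \<and> m < 1" unfolding m_def using r1 r2 rp
    by (simp add: divide_less_eq r_def)
  fix a1 a2 :: 'a
  have "(1 - m) / r1 = (1 - t) / r" "m / r2 = t / r" using rm1 rm rp r1 r2 by (simp_all add: field_simps)
  then show "(1 - m) *\<^sub>R ((1 / r1) *\<^sub>R a1) + m *\<^sub>R ((1 / r2) *\<^sub>R a2) = (1 / r) *\<^sub>R ((1 - t) *\<^sub>R a1 + t *\<^sub>R a2)"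
    by (simp add: scaleR_add_right)
qed

text \<open>A perspective \<open>(r, z) \<mapsto> r f(z/r)\<close> inherits the convexity of \<open>f\<close>, strictly only between points
  on different rays.\<close>

lemma perspective_le_strict_if:
  fixes f :: "'a::real_vector \<Rightarrow> real"
  assumes f: "convex_on_strict_if b C f" and r: "r1 > 0" "r2 > 0"
    and z: "(1 / r1) *\<^sub>R z1 \<in> C" "(1 / r2) *\<^sub>R z2 \<in> C" and t: "0 < t" "t < 1"
  defines "r \<equiv> (1 - t) * r1 + t * r2"
  shows "le_strict_if (b \<and> (1 / r1) *\<^sub>R z1 \<noteq> (1 / r2) *\<^sub>R z2)
    (r * f ((1 / r) *\<^sub>R ((1 - t) *\<^sub>R z1 + t *\<^sub>R z2)))
    ((1 - t) * (r1 * f ((1 / r1) *\<^sub>R z1)) + t * (r2 * f ((1 / r2) *\<^sub>R z2)))"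
proof -
  define m where "m = t * r2 / r"
  note P = perspective_weights[OF r less_imp_le[OF t(1)] less_imp_le[OF t(2)], folded r_def, folded m_def]
  have m: "0 < m" "m < 1" using P(7)[OF t] by auto
  have rhs: "(1 - t) * (r1 * f y1) + t * (r2 * f y2) = r * ((1 - m) * f y1 + m * f y2)" for y1 y2
  proof -
    have "r * ((1 - m) * f y1 + m * f y2) = (r * (1 - m)) * f y1 + (r * m) * f y2"
      by (simp add: algebra_simps)
    then show ?thesis unfolding P(4,5) by simp
  qed
  show ?thesis
  proof (cases "(1 / r1) *\<^sub>R z1 = (1 / r2) *\<^sub>R z2")
    case True
    have "(1 / r) *\<^sub>R ((1 - t) *\<^sub>R z1 + t *\<^sub>R z2) = (1 / r1) *\<^sub>R z1"
      unfolding P(6)[symmetric] True scaleR_add_left[symmetric] by simp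
    then show ?thesis
      unfolding rhs using True by (simp add: le_strict_if_def algebra_simps)
  next
    case False
    with f z m have "le_strict_if b (f ((1 - m) *\<^sub>R ((1 / r1) *\<^sub>R z1) + m *\<^sub>R ((1 / r2) *\<^sub>R z2)))
        ((1 - m) * f ((1 / r1) *\<^sub>R z1) + m * f ((1 / r2) *\<^sub>R z2))"
      unfolding convex_on_strict_if_def by blast
    then show ?thesis
      unfolding P(6) rhs using False le_strict_if_mult_left_iff[OF P(1)] by simp
  qed
qed

lemma convex_perspective_vimage:
  fixes r :: "'a::real_vector \<Rightarrow> real" and g :: "'a \<Rightarrow> 'b::real_vector"
  assumes "convex C"
    and r: "\<And>x y t. r ((1 - t) *\<^sub>R x + t *\<^sub>R y) = (1 - t) * r x + t * r y"
    and g: "\<And>x y t. g ((1 - t) *\<^sub>R x + t *\<^sub>R y) = (1 - t) *\<^sub>R g x + t *\<^sub>R g y"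
  shows "convex {x. r x > 0 \<and> (1 / r x) *\<^sub>R g x \<in> C}"
  unfolding convex_alt
proof (intro ballI allI impI, elim conjE)
  fix x y and t :: real
  assume "x \<in> {x. r x > 0 \<and> (1 / r x) *\<^sub>R g x \<in> C}" "y \<in> {x. r x > 0 \<and> (1 / r x) *\<^sub>R g x \<in> C}"
    and t: "0 \<le> t" "t \<le> 1"
  then have pos: "r x > 0" "r y > 0" and mem: "(1 / r x) *\<^sub>R g x \<in> C" "(1 / r y) *\<^sub>R g y \<in> C" by auto
  note P = perspective_weights[OF pos t]
  show "(1 - t) *\<^sub>R x + t *\<^sub>R y \<in> {x. r x > 0 \<and> (1 / r x) *\<^sub>R g x \<in> C}"
    using P(1) convexD_alt[OF assms(1) mem P(2,3)] unfolding P(6) by (simp add: r g)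
qed

section \<open>The energy density in conserved variables\<close>

definition specific_state :: "real \<times> (real^3) \<times> real \<Rightarrow> real \<times> real"
  where "specific_state x = (inverse (fst x), snd (snd x) * inverse (fst x))"

definition energy_density :: "(real \<times> real \<Rightarrow> real) \<Rightarrow> real \<times> (real^3) \<times> real \<Rightarrow> real"
  where "energy_density u x =
    fst x * u (specific_state x) + inner (fst (snd x)) (fst (snd x)) * inverse (2 * fst x)"

definition specific_state_deriv :: "real \<times> (real^3) \<times> real \<Rightarrow> real \<times> (real^3) \<times> real \<Rightarrow> real \<times> real"
  where "specific_state_deriv x h =
    (- fst h / fst x ^ 2, snd (snd h) / fst x - snd (snd x) * fst h / fst x ^ 2)"

definition energy_density_hess_form ::
  "(real \<times> real \<Rightarrow> real) \<Rightarrow> real \<times> (real^3) \<times> real \<Rightarrow> real \<times> (real^3) \<times> real \<Rightarrow> real"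
  where "energy_density_hess_form u x h =
    fst x * hess u (specific_state x) (specific_state_deriv x h) (specific_state_deriv x h)
    + inner (fst (snd h) - (fst h / fst x) *\<^sub>R fst (snd x)) (fst (snd h) - (fst h / fst x) *\<^sub>R fst (snd x)) / fst x"

lemma specific_state_eq_perspective: "specific_state x = (1 / fst x) *\<^sub>R (1, snd (snd x))"
  by (simp add: specific_state_def divide_inverse)

lemma energy_density_second_derivative:
  assumes u: "C2_on D u" "open D" and x: "fst x > 0" "specific_state x \<in> D"
  shows "\<exists>H. has_second_derivative (energy_density u) (frechet_D (energy_density u)) H x \<and>
     frechet_D (energy_density u) x (0, 0, 1) = frechet_D u (specific_state x) (0, 1) \<and>
     (\<forall>h. H h h = energy_density_hess_form u x h)"
proof -
  have lin_rho: "bounded_linear (fst :: real \<times> (real^3) \<times> real \<Rightarrow> real)"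
    and lin_M: "bounded_linear (\<lambda>y::real \<times> (real^3) \<times> real. fst (snd y))"
    and lin_S: "bounded_linear (\<lambda>y::real \<times> (real^3) \<times> real. snd (snd y))"
    and lin_2rho: "bounded_linear (\<lambda>y::real \<times> (real^3) \<times> real. 2 * fst y)"
    by (auto intro: bounded_linear_fst bounded_linear_compose[OF bounded_linear_fst bounded_linear_snd]
        bounded_linear_compose[OF bounded_linear_snd bounded_linear_snd]
        bounded_linear_compose[OF bounded_linear_mult_right bounded_linear_fst])
  have x0: "fst x \<noteq> 0" "2 * fst x \<noteq> 0" using x by auto
  note inv_rho = has_second_derivative_compose[OF has_second_derivative_linear[OF lin_rho]
      has_second_derivative_inverse[OF x0(1)]]
  note inv_2rho = has_second_derivative_compose[OF has_second_derivative_linear[OF lin_2rho]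
      has_second_derivative_inverse[OF x0(2)]]
  note state = has_second_derivative_Pair[OF inv_rho
      has_second_derivative_bilinear[OF bounded_bilinear_mult has_second_derivative_linear[OF lin_S] inv_rho]]
  note internal = has_second_derivative_bilinear[OF bounded_bilinear_mult has_second_derivative_linear[OF lin_rho]
      has_second_derivative_compose[OF state C2_on_imp_has_second_derivative[OF u x(2), unfolded specific_state_def]]]
  note kinetic = has_second_derivative_bilinear[OF bounded_bilinear_mult has_second_derivative_bilinear[OF
      bounded_bilinear_inner has_second_derivative_linear[OF lin_M] has_second_derivative_linear[OF lin_M]] inv_2rho]
  note E = has_second_derivative_add[OF internal kinetic, folded specific_state_def, folded energy_density_def]
  \<comment> \<open>Opaque names for the basis of \<open>\<real>\<^sup>2\<close>, so that expanding in it terminates.\<close>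
  define e1 where "e1 = (1::real, 0::real)"
  define e2 where "e2 = (0::real, 1::real)"
  note eval = blinfun_apply_real_Pair[folded e1_def e2_def] bounded_linear_Blinfun_apply
    lin_rho lin_M lin_S lin_2rho bounded_linear_Pair bounded_linear_zero
    plus_blinfun.rep_eq scaleR_blinfun.rep_eq uminus_blinfun.rep_eq minus_blinfun.rep_eq inner_add inner_diff
    bounded_bilinear.prod_left.rep_eq[OF bounded_bilinear_mult] bounded_bilinear.prod_right.rep_eq[OF bounded_bilinear_mult]
    bounded_bilinear.prod_left.rep_eq[OF bounded_bilinear_inner] bounded_bilinear.prod_right.rep_eq[OF bounded_bilinear_inner]
  show ?thesis
    apply (intro exI conjI allI, rule has_second_derivative_frechet_D[OF E])
     apply (subst frechet_D_eqI[OF has_second_derivative_imp_has_derivative[OF E]])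
    using x0(1) apply (simp add: eval)
    apply (simp add: eval energy_density_hess_form_def specific_state_deriv_def specific_state_def)
    using x0(1) apply (simp add: field_simps power2_eq_square power3_eq_cube inner_commute)
    done
qed

lemma hess_pos_def_iff_energy_density_hess_form:
  assumes rho: "fst x > 0"
  shows "hess_pos_def u (specific_state x) \<longleftrightarrow> (\<forall>k. k \<noteq> 0 \<longrightarrow> energy_density_hess_form u x k > 0)"
proof -
  define r where "r = fst x"
  define M where "M = fst (snd x)"
  define S where "S = snd (snd x)"
  define w where "w = specific_state_deriv x"
  define Hu where "Hu = hess u (specific_state x)"
  have r: "r > 0" using rho by (simp add: r_def)
  have form: "energy_density_hess_form u x h = r * Hu (w h) (w h)
     + inner (fst (snd h) - (fst h / r) *\<^sub>R M) (fst (snd h) - (fst h / r) *\<^sub>R M) / r" for h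
    by (simp add: energy_density_hess_form_def r_def M_def w_def Hu_def)
  show ?thesis
  proof
    assume pos: "hess_pos_def u (specific_state x)"
    show "\<forall>k. k \<noteq> 0 \<longrightarrow> energy_density_hess_form u x k > 0"
    proof (intro allI impI)
      fix k :: "real \<times> (real^3) \<times> real" assume k: "k \<noteq> 0"
      have kin: "inner (fst (snd k) - (fst k / r) *\<^sub>R M) (fst (snd k) - (fst k / r) *\<^sub>R M) / r \<ge> 0"
        using r by simp
      show "energy_density_hess_form u x k > 0"
      proof (cases "w k = 0")
        case False
        then have "Hu (w k) (w k) > 0" using pos unfolding hess_pos_def_def Hu_def by blast
        then show ?thesis using form[of k] r kin by (smt (verit) mult_pos_pos)
      next
        case True
        then have rho0: "fst k = 0"
          using rho by (simp add: w_def specific_state_deriv_def zero_prod_def)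
        with True have "snd (snd k) = 0"
          using rho by (simp add: w_def specific_state_deriv_def zero_prod_def)
        with rho0 k have "fst (snd k) \<noteq> 0" by (auto simp: prod_eq_iff)
        then show ?thesis using form[of k] True rho0 r by simp
      qed
    qed
  next
    assume pos: "\<forall>k. k \<noteq> 0 \<longrightarrow> energy_density_hess_form u x k > 0"
    show "hess_pos_def u (specific_state x)"
      unfolding hess_pos_def_def
    proof (intro allI impI)
      fix v :: "real \<times> real" assume v: "v \<noteq> 0"
      text \<open>A tangent vector with \<open>w k = v\<close> along which the kinetic term vanishes.\<close>
      define kr where "kr = - fst v * r ^ 2"
      define k where "k = (kr, (kr / r) *\<^sub>R M, r * snd v + S * kr / r)"
      have wk: "w k = v"
        using r by (simp add: w_def specific_state_deriv_def k_def kr_def S_def r_def field_simps power2_eq_square prod_eq_iff)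
      have "k \<noteq> 0"
      proof
        assume "k = 0"
        then have "kr = 0" "r * snd v + S * kr / r = 0" by (auto simp: k_def zero_prod_def)
        with v r show False by (simp add: kr_def prod_eq_iff)
      qed
      then have "energy_density_hess_form u x k > 0" using pos by blast
      then have "r * Hu v v > 0" using form[of k] wk by (simp add: k_def)
      then show "hess u (specific_state x) v v > 0" using r by (simp add: Hu_def zero_less_mult_iff)
    qed
  qed
qed

section \<open>The change of variables between entropy and energy\<close>

locale internal_energy =
  fixes D :: "(real \<times> real) set" and u :: "real \<times> real \<Rightarrow> real"
  assumes open_D: "open D" and convex_D: "convex D" and D_pos: "D \<subseteq> {p. fst p > 0}"
    and C2_u: "C2_on D u" and u_s_pos: "\<forall>p\<in>D. frechet_D u p (0, 1) > 0"
begin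

definition state_domain :: "(real \<times> (real^3) \<times> real) set"
  where "state_domain = {x. fst x > 0 \<and> specific_state x \<in> D}"

definition to_conserved :: "real \<times> (real^3) \<times> real \<Rightarrow> real \<times> (real^3) \<times> real"
  where "to_conserved x = (fst x, fst (snd x), energy_density u x)"

definition from_conserved :: "real \<times> (real^3) \<times> real \<Rightarrow> real \<times> (real^3) \<times> real"
  where "from_conserved q = (fst q, fst (snd q), Sbar D u q)"

lemma u_strict_mono_entropy:
  assumes "(v, s1) \<in> D" "(v, s2) \<in> D" "s1 < s2"
  shows "u (v, s1) < u (v, s2)"
proof (rule DERIV_pos_imp_increasing[OF assms(3)])
  fix s assume s: "s1 \<le> s" "s \<le> s2"
  define t where "t = (s - s1) / (s2 - s1)"
  have "t * (s2 - s1) = s - s1" using assms(3) by (simp add: t_def)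
  then have "(v, s) = (1 - t) *\<^sub>R (v, s1) + t *\<^sub>R (v, s2)"
    by (simp add: algebra_simps)
  also have "\<dots> \<in> D"
    using s assms by (intro convexD_alt[OF convex_D]) (auto simp: t_def field_simps)
  finally have sD: "(v, s) \<in> D" .
  then have "(u has_derivative blinfun_apply (frechet_D u (v, s))) (at (v, s))"
    using C2_u unfolding C2_on_def by auto
  from has_derivative_compose[OF has_derivative_Pair[OF has_derivative_const has_derivative_ident] this]
  have "((\<lambda>s. u (v, s)) has_derivative (\<lambda>h. frechet_D u (v, s) (0, h))) (at s)"
    by simp
  moreover have "(\<lambda>h. frechet_D u (v, s) (0, h)) = (\<lambda>h. frechet_D u (v, s) (0, 1) * h)"
  proof
    fix h :: real
    have "(0::real, h) = h *\<^sub>R (0, 1)" by simp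
    then show "frechet_D u (v, s) (0, h) = frechet_D u (v, s) (0, 1) * h"
      by (metis blinfun.scaleR_right real_scaleR_def mult.commute)
  qed
  ultimately have "((\<lambda>s. u (v, s)) has_real_derivative frechet_D u (v, s) (0, 1)) (at s)"
    by (simp add: has_field_derivative_def)
  with u_s_pos sD show "\<exists>y. ((\<lambda>s. u (v, s)) has_real_derivative y) (at s) \<and> y > 0"
    by blast
qed

lemma sfun_eqI:
  assumes "(v, s) \<in> D" "energy u v s w = eps"
  shows "sfun D u v eps w = s"
  unfolding sfun_def
proof (rule the_equality)
  fix s' assume s': "(v, s') \<in> D \<and> energy u v s' w = eps"
  with assms have "u (v, s') = u (v, s)" by (simp add: energy_def)
  then show "s' = s"
    using u_strict_mono_entropy[of v s' s] u_strict_mono_entropy[of v s s'] s' assms(1)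
    by (cases s' s rule: linorder_cases) auto
qed (use assms in simp)

lemma to_conserved_mem: "x \<in> state_domain \<Longrightarrow> to_conserved x \<in> Omega D u"
  and Sbar_to_conserved: "x \<in> state_domain \<Longrightarrow> Sbar D u (to_conserved x) = snd (snd x)"
  and from_to_conserved: "x \<in> state_domain \<Longrightarrow> from_conserved (to_conserved x) = x"
proof -
  assume "x \<in> state_domain"
  moreover obtain r M S where x: "x = (r, M, S)" by (cases x) auto
  ultimately have r: "r > 0" and sD: "(inverse r, S * inverse r) \<in> D"
    by (auto simp: state_domain_def specific_state_def)
  have E: "energy u (1 / r) (S * inverse r) ((1 / r) *\<^sub>R M) = energy_density u x / r"
    using r by (simp add: energy_def energy_density_def specific_state_def x field_simps dot_square_norm power2_eq_square)
  then have "(1 / r, energy_density u x / r, (1 / r) *\<^sub>R M) \<in> Ds D u"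
    unfolding Ds_def using sD by (auto simp: divide_inverse intro!: exI[of _ "S * inverse r"])
  then show "to_conserved x \<in> Omega D u" using r by (auto simp: Omega_def to_conserved_def x)
  have "sfun D u (1 / r) (energy_density u x / r) ((1 / r) *\<^sub>R M) = S * inverse r"
    by (rule sfun_eqI) (use sD E in \<open>auto simp: divide_inverse\<close>)
  then show "Sbar D u (to_conserved x) = snd (snd x)" using r by (simp add: Sbar_def to_conserved_def x)
  then show "from_conserved (to_conserved x) = x" by (simp add: from_conserved_def to_conserved_def x)
qed

lemma from_conserved_mem: "q \<in> Omega D u \<Longrightarrow> from_conserved q \<in> state_domain"
  and to_from_conserved: "q \<in> Omega D u \<Longrightarrow> to_conserved (from_conserved q) = q"
proof -
  assume "q \<in> Omega D u"
  moreover obtain r M E where q: "q = (r, M, E)" by (cases q) auto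
  ultimately obtain s where r: "r > 0" and sD: "(1 / r, s) \<in> D"
    and E: "E / r = energy u (1 / r) s ((1 / r) *\<^sub>R M)"
    by (auto simp: Omega_def Ds_def)
  have "sfun D u (1 / r) (E / r) ((1 / r) *\<^sub>R M) = s" by (rule sfun_eqI) (use sD E in auto)
  then have Sbar: "Sbar D u (r, M, E) = r * s" by (simp add: Sbar_def)
  have "specific_state (r, M, r * s) = (1 / r, s)" using r by (simp add: specific_state_def divide_inverse)
  with r sD show "from_conserved q \<in> state_domain" by (simp add: state_domain_def from_conserved_def Sbar q)
  have "energy_density u (r, M, r * s) = E"
    using r E by (simp add: energy_density_def specific_state_def energy_def field_simps dot_square_norm power2_eq_square)
  then show "to_conserved (from_conserved q) = q" by (simp add: to_conserved_def from_conserved_def Sbar q)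
qed

lemma Omega_eq_image: "Omega D u = to_conserved ` state_domain"
  using to_conserved_mem from_conserved_mem to_from_conserved by (metis image_eqI subsetI subset_antisym image_subsetI)

lemma D_eq_image: "D = specific_state ` state_domain"
proof (intro subset_antisym subsetI)
  fix p assume p: "p \<in> D"
  then have v: "fst p > 0" using D_pos by auto
  define x where "x = (inverse (fst p), 0 :: real^3, snd p * inverse (fst p))"
  have "specific_state x = p" using v by (simp add: specific_state_def x_def prod_eq_iff)
  moreover have "x \<in> state_domain" using v p calculation by (simp add: state_domain_def x_def)
  ultimately show "p \<in> specific_state ` state_domain" by (metis image_eqI)
qed (auto simp: state_domain_def)

lemma energy_density_second_derivative_at:
  "x \<in> state_domain \<Longrightarrow> \<exists>H. has_second_derivative (energy_density u) (frechet_D (energy_density u)) H x \<and>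
     frechet_D (energy_density u) x (0, 0, 1) = frechet_D u (specific_state x) (0, 1) \<and>
     (\<forall>h. H h h = energy_density_hess_form u x h)"
  by (rule energy_density_second_derivative[OF C2_u open_D]) (auto simp: state_domain_def)

lemma has_derivative_energy_density:
  assumes "x \<in> state_domain"
  shows "(energy_density u has_derivative frechet_D (energy_density u) x) (at x)"
proof -
  from energy_density_second_derivative_at[OF assms] obtain H
    where "has_second_derivative (energy_density u) (frechet_D (energy_density u)) H x" by blast
  then show ?thesis by (rule has_second_derivative_imp_has_derivative)
qed

lemma energy_density_deriv_last_pos:
  assumes "x \<in> state_domain"
  shows "frechet_D (energy_density u) x (0, 0, 1) > 0"
proof -
  from energy_density_second_derivative_at[OF assms]
  have "frechet_D (energy_density u) x (0, 0, 1) = frechet_D u (specific_state x) (0, 1)" by blast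
  moreover have "specific_state x \<in> D" using assms by (simp add: state_domain_def)
  ultimately show ?thesis using u_s_pos by simp
qed

lemma open_state_domain: "open state_domain"
proof -
  have "continuous_on {x. fst x > 0} specific_state"
    unfolding specific_state_def by (intro continuous_intros) auto
  from continuous_open_preimage[OF this _ open_D] have "open ({x. fst x > 0} \<inter> specific_state -` D)"
    by (simp add: open_Collect_less continuous_on_fst continuous_on_const)
  moreover have "state_domain = {x. fst x > 0} \<inter> specific_state -` D" by (auto simp: state_domain_def)
  ultimately show ?thesis by simp
qed

lemma continuous_on_to_conserved: "continuous_on state_domain to_conserved"
proof (rule continuous_at_imp_continuous_on, intro ballI)
  fix x assume "x \<in> state_domain"
  then have "isCont (energy_density u) x" by (rule has_derivative_continuous[OF has_derivative_energy_density])
  then show "isCont to_conserved x" unfolding to_conserved_def by (intro continuous_intros)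
qed

lemma open_Omega: "open (Omega D u)"
proof -
  have "inj_on to_conserved state_domain" by (metis from_to_conserved inj_on_inverseI)
  with continuous_on_to_conserved show ?thesis
    unfolding Omega_eq_image by (rule invariance_of_domain[OF _ open_state_domain])
qed

section \<open>Hessian of the entropy density\<close>

definition entropy_deriv :: "real \<times> (real^3) \<times> real \<Rightarrow> (real \<times> (real^3) \<times> real) \<Rightarrow>\<^sub>L real"
  where "entropy_deriv q =
    inverse (frechet_D (energy_density u) (from_conserved q) (0, 0, 1))
      *\<^sub>R (last_coord - (frechet_D (energy_density u) (from_conserved q) o\<^sub>L zero_last_coord))"

lemma entropy_deriv_apply:
  "entropy_deriv q h = (snd (snd h) - frechet_D (energy_density u) (from_conserved q) (fst h, fst (snd h), 0))
     / frechet_D (energy_density u) (from_conserved q) (0, 0, 1)"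
  by (simp add: entropy_deriv_def minus_blinfun.rep_eq scaleR_blinfun.rep_eq divide_inverse mult.commute)

text \<open>The derivatives of \<open>to_conserved\<close> at \<open>from_conserved q\<close> and of \<open>from_conserved\<close> at \<open>q\<close>
  are mutually inverse.\<close>

lemma tangent_maps_inverse:
  assumes "q \<in> Omega D u"
  defines "A \<equiv> frechet_D (energy_density u) (from_conserved q)"
  shows "\<And>h. entropy_deriv q (fst h, fst (snd h), A h) = snd (snd h)"
    and "\<And>h. A (fst h, fst (snd h), entropy_deriv q h) = snd (snd h)"
proof -
  have a: "A (0, 0, 1) > 0"
    unfolding A_def by (rule energy_density_deriv_last_pos[OF from_conserved_mem[OF assms(1)]])
  fix h :: "real \<times> (real^3) \<times> real"
  show "entropy_deriv q (fst h, fst (snd h), A h) = snd (snd h)"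
    using a by (subst blinfun_apply_split_last[of A h]) (simp add: entropy_deriv_apply A_def)
  show "A (fst h, fst (snd h), entropy_deriv q h) = snd (snd h)"
    using a by (subst blinfun_apply_split_last) (simp add: entropy_deriv_apply A_def)
qed

lemma has_derivative_from_conserved:
  assumes q: "q \<in> Omega D u"
  shows "(from_conserved has_derivative (\<lambda>h. (fst h, fst (snd h), entropy_deriv q h))) (at q)"
proof -
  define x where "x = from_conserved q"
  have x: "x \<in> state_domain" "to_conserved x = q"
    using from_conserved_mem[OF q] to_from_conserved[OF q] by (auto simp: x_def)
  have "(to_conserved has_derivative (\<lambda>h. (fst h, fst (snd h), frechet_D (energy_density u) x h))) (at x)"
    unfolding to_conserved_def[abs_def]
    by (intro has_derivative_Pair has_derivative_fst[OF has_derivative_ident]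
        has_derivative_fst[OF has_derivative_snd[OF has_derivative_ident]] has_derivative_energy_density x)
  moreover have "(\<lambda>h. (fst h, fst (snd h), frechet_D (energy_density u) x h))
      \<circ> (\<lambda>h. (fst h, fst (snd h), entropy_deriv q h)) = id"
    using tangent_maps_inverse(2)[OF q] by (simp add: fun_eq_iff x_def)
  ultimately show ?thesis
    using has_derivative_inverse_strong[OF open_state_domain x(1) continuous_on_to_conserved]
      from_to_conserved x by auto
qed

lemma has_derivative_Sbar:
  "q \<in> Omega D u \<Longrightarrow> (Sbar D u has_derivative entropy_deriv q) (at q)"
  using has_derivative_snd[OF has_derivative_snd[OF has_derivative_from_conserved]]
  by (simp add: from_conserved_def)

lemma hess_Sbar:
  fixes h :: "real \<times> (real^3) \<times> real"
  assumes q: "q \<in> Omega D u"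
    and HE: "has_second_derivative (energy_density u) (frechet_D (energy_density u)) HE (from_conserved q)"
  defines "k \<equiv> (fst h, fst (snd h), entropy_deriv q h)"
  shows "hess (Sbar D u) q h h = - HE k k / frechet_D (energy_density u) (from_conserved q) (0, 0, 1)"
proof -
  define g' where "g' = (\<lambda>h. (fst h, fst (snd h), entropy_deriv q h))"
  define A where "A = frechet_D (energy_density u) (from_conserved q)"
  define a where "a = A (0, 0, 1)"
  have a: "a > 0"
    unfolding a_def A_def by (rule energy_density_deriv_last_pos[OF from_conserved_mem[OF q]])
  have "(from_conserved has_derivative g') (at q)"
    unfolding g'_def by (rule has_derivative_from_conserved[OF q])
  moreover have "(frechet_D (energy_density u) has_derivative HE) (at (from_conserved q))"
    using HE unfolding has_second_derivative_def by auto
  ultimately have dA: "((\<lambda>y. frechet_D (energy_density u) (from_conserved y)) has_derivative (\<lambda>k. HE (g' k))) (at q)"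
    by (rule has_derivative_compose)
  have dAe: "((\<lambda>y. frechet_D (energy_density u) (from_conserved y) (0, 0, 1)) has_derivative (\<lambda>k. HE (g' k) (0, 0, 1))) (at q)"
    by (rule bounded_linear.has_derivative[OF blinfun.bounded_linear_left dA])
  have dc: "((\<lambda>y. inverse (frechet_D (energy_density u) (from_conserved y) (0, 0, 1))) has_derivative
      (\<lambda>k. - (inverse a * HE (g' k) (0, 0, 1) * inverse a))) (at q)"
    using Deriv.has_derivative_inverse[OF _ dAe] a by (simp add: a_def A_def)
  have dB: "((\<lambda>y. last_coord - (frechet_D (energy_density u) (from_conserved y) o\<^sub>L zero_last_coord))
      has_derivative (\<lambda>k. - (HE (g' k) o\<^sub>L zero_last_coord))) (at q)"
    by (rule has_derivative_eq_rhs, rule has_derivative_diff[OF has_derivative_const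
        bounded_bilinear.FDERIV[OF bounded_bilinear_blinfun_compose dA has_derivative_const]]) simp
  define HS where "HS = (\<lambda>k. inverse a *\<^sub>R (- (HE (g' k) o\<^sub>L zero_last_coord))
    + (- (inverse a * HE (g' k) (0, 0, 1) * inverse a)) *\<^sub>R (last_coord - (A o\<^sub>L zero_last_coord)))"
  have "(entropy_deriv has_derivative HS) (at q)"
    unfolding entropy_deriv_def[abs_def] HS_def
    by (rule has_derivative_eq_rhs, rule has_derivative_scaleR[OF dc dB]) (simp add: a_def A_def)
  moreover have "\<forall>\<^sub>F y in nhds q. (Sbar D u has_derivative entropy_deriv y) (at y)"
    using eventually_nhds_in_open[OF open_Omega q] by eventually_elim (rule has_derivative_Sbar)
  ultimately have "blinfun_apply (hess (Sbar D u) q) = HS"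
    by (intro hess_eqI has_second_derivative_frechet_D) (simp add: has_second_derivative_def)
  moreover have "HS h h = - HE (g' h) (g' h) / a"
  proof -
    have "HS h h = - (inverse a * HE (g' h) (fst h, fst (snd h), 0))
       - inverse a * HE (g' h) (0, 0, 1) * inverse a * (snd (snd h) - A (fst h, fst (snd h), 0))"
      by (simp add: HS_def plus_blinfun.rep_eq minus_blinfun.rep_eq scaleR_blinfun.rep_eq
          uminus_blinfun.rep_eq algebra_simps)
    also have "\<dots> = - HE (g' h) (g' h) / a"
      using a by (subst (2) blinfun_apply_split_last)
        (simp add: g'_def entropy_deriv_apply A_def a_def field_simps)
    finally show ?thesis .
  qed
  ultimately show ?thesis by (simp add: k_def g'_def a_def A_def)
qed

lemma hess_neg_def_Sbar_iff:
  assumes q: "q \<in> Omega D u"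
    and HE: "has_second_derivative (energy_density u) (frechet_D (energy_density u)) HE (from_conserved q)"
  shows "hess_neg_def (Sbar D u) q \<longleftrightarrow> (\<forall>k. k \<noteq> 0 \<longrightarrow> HE k k > 0)"
  unfolding hess_neg_def_def
proof (rule neg_def_iff_pos_def_transform[where g = "\<lambda>h. (fst h, fst (snd h), entropy_deriv q h)"
      and g' = "\<lambda>k. (fst k, fst (snd k), frechet_D (energy_density u) (from_conserved q) k)"])
  show "frechet_D (energy_density u) (from_conserved q) (0, 0, 1) > 0"
    by (rule energy_density_deriv_last_pos[OF from_conserved_mem[OF q]])
qed (simp_all add: hess_Sbar[OF q HE] tangent_maps_inverse[OF q] zero_prod_def[symmetric])

lemma hess_pos_def_iff_hess_neg_def_Sbar:
  assumes x: "x \<in> state_domain"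
  shows "hess_pos_def u (specific_state x) \<longleftrightarrow> hess_neg_def (Sbar D u) (to_conserved x)"
proof -
  obtain H where H: "has_second_derivative (energy_density u) (frechet_D (energy_density u)) H x"
    and form: "\<forall>h. H h h = energy_density_hess_form u x h"
    using energy_density_second_derivative_at[OF x] by blast
  have "hess_pos_def u (specific_state x) \<longleftrightarrow> (\<forall>k. k \<noteq> 0 \<longrightarrow> H k k > 0)"
    using hess_pos_def_iff_energy_density_hess_form[of x u] x form by (simp add: state_domain_def)
  also have "\<dots> \<longleftrightarrow> hess_neg_def (Sbar D u) (to_conserved x)"
    using hess_neg_def_Sbar_iff[OF to_conserved_mem[OF x]] H from_to_conserved[OF x] by simp
  finally show ?thesis .
qed

theorem hess_pos_def_iff_hess_neg_def:
  "(\<forall>p\<in>D. hess_pos_def u p) \<longleftrightarrow> (\<forall>q\<in>Omega D u. hess_neg_def (Sbar D u) q)"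
proof -
  have "(\<forall>p\<in>D. hess_pos_def u p) \<longleftrightarrow> (\<forall>p\<in>specific_state ` state_domain. hess_pos_def u p)"
    by (metis D_eq_image)
  also have "\<dots> \<longleftrightarrow> (\<forall>x\<in>state_domain. hess_neg_def (Sbar D u) (to_conserved x))"
    using hess_pos_def_iff_hess_neg_def_Sbar by simp
  also have "\<dots> \<longleftrightarrow> (\<forall>q\<in>Omega D u. hess_neg_def (Sbar D u) q)"
    by (simp add: Omega_eq_image)
  finally show ?thesis .
qed

section \<open>Convexity of the energy and concavity of the entropy\<close>

lemma convex_state_domain: "convex state_domain"
proof -
  have "state_domain = {x. fst x > 0 \<and> (1 / fst x) *\<^sub>R (1::real, snd (snd x)) \<in> D}"
    by (simp add: state_domain_def specific_state_eq_perspective)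
  also have "convex \<dots>"
    by (rule convex_perspective_vimage[OF convex_D]) (simp_all add: algebra_simps)
  finally show ?thesis .
qed

lemma convex_Omega:
  assumes "convex (Ds D u)"
  shows "convex (Omega D u)"
proof -
  have "Omega D u = {q. fst q > 0 \<and> (1 / fst q) *\<^sub>R (1::real, snd (snd q), fst (snd q)) \<in> Ds D u}"
    by (auto simp: Omega_def divide_inverse mult.commute)
  also have "convex \<dots>"
    by (rule convex_perspective_vimage[OF assms]) (simp_all add: algebra_simps)
  finally show ?thesis .
qed

lemma energy_density_eq_perspectives:
  assumes "fst x > 0"
  shows "energy_density u x = fst x * u ((1 / fst x) *\<^sub>R (1, snd (snd x)))
    + 1 / 2 * (fst x * inner ((1 / fst x) *\<^sub>R fst (snd x)) ((1 / fst x) *\<^sub>R fst (snd x)))"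
  using assms by (simp add: energy_density_def specific_state_eq_perspective field_simps)

lemma convex_on_strict_if_energy_density:
  assumes u: "convex_on_strict_if b D u"
  shows "convex_on_strict_if b state_domain (energy_density u)"
  unfolding convex_on_strict_if_def
proof (intro conjI convex_state_domain ballI allI impI)
  fix x1 x2 and t :: real
  assume x: "x1 \<in> state_domain" "x2 \<in> state_domain" and tb: "0 < t \<and> t < 1 \<and> (b \<longrightarrow> x1 \<noteq> x2)"
  then have t: "0 < t" "t < 1" by auto
  obtain r1 M1 S1 where x1: "x1 = (r1, M1, S1)" by (cases x1) auto
  obtain r2 M2 S2 where x2: "x2 = (r2, M2, S2)" by (cases x2) auto
  have r: "r1 > 0" "r2 > 0" and z: "(1 / r1) *\<^sub>R (1, S1) \<in> D" "(1 / r2) *\<^sub>R (1, S2) \<in> D"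
    using x by (auto simp: state_domain_def specific_state_eq_perspective x1 x2)
  define r where "r = (1 - t) * r1 + t * r2"
  have "r > 0" using perspective_weights(1)[OF r] t by (simp add: r_def)
  have internal: "le_strict_if (b \<and> (1 / r1) *\<^sub>R (1::real, S1) \<noteq> (1 / r2) *\<^sub>R (1::real, S2))
      (r * u ((1 / r) *\<^sub>R ((1 - t) *\<^sub>R (1, S1) + t *\<^sub>R (1, S2))))
      ((1 - t) * (r1 * u ((1 / r1) *\<^sub>R (1, S1))) + t * (r2 * u ((1 / r2) *\<^sub>R (1, S2))))"
    using perspective_le_strict_if[OF u r z t] unfolding r_def .
  have "le_strict_if ((1 / r1) *\<^sub>R M1 \<noteq> (1 / r2) *\<^sub>R M2)
      (r * inner ((1 / r) *\<^sub>R ((1 - t) *\<^sub>R M1 + t *\<^sub>R M2)) ((1 / r) *\<^sub>R ((1 - t) *\<^sub>R M1 + t *\<^sub>R M2)))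
      ((1 - t) * (r1 * inner ((1 / r1) *\<^sub>R M1) ((1 / r1) *\<^sub>R M1))
        + t * (r2 * inner ((1 / r2) *\<^sub>R M2) ((1 / r2) *\<^sub>R M2)))"
    using perspective_le_strict_if[OF convex_on_strict_if_inner_self r UNIV_I UNIV_I t, of True M1 M2]
    unfolding r_def by (simp only: simp_thms)
  then have kinetic: "le_strict_if ((1 / r1) *\<^sub>R M1 \<noteq> (1 / r2) *\<^sub>R M2)
      (1 / 2 * (r * inner ((1 / r) *\<^sub>R ((1 - t) *\<^sub>R M1 + t *\<^sub>R M2)) ((1 / r) *\<^sub>R ((1 - t) *\<^sub>R M1 + t *\<^sub>R M2))))
      (1 / 2 * ((1 - t) * (r1 * inner ((1 / r1) *\<^sub>R M1) ((1 / r1) *\<^sub>R M1))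
        + t * (r2 * inner ((1 / r2) *\<^sub>R M2) ((1 / r2) *\<^sub>R M2))))"
    by (rule le_strict_if_mult_left_iff[THEN iffD2, rotated]) simp
  have strict: "b \<longrightarrow> (b \<and> (1 / r1) *\<^sub>R (1::real, S1) \<noteq> (1 / r2) *\<^sub>R (1::real, S2))
      \<or> (1 / r1) *\<^sub>R M1 \<noteq> (1 / r2) *\<^sub>R M2"
  proof (intro impI, rule ccontr)
    assume "b" and same: "\<not> ((b \<and> (1 / r1) *\<^sub>R (1::real, S1) \<noteq> (1 / r2) *\<^sub>R (1::real, S2))
      \<or> (1 / r1) *\<^sub>R M1 \<noteq> (1 / r2) *\<^sub>R M2)"
    then have "(1 / r1) *\<^sub>R (1::real, S1) = (1 / r2) *\<^sub>R (1, S2)" "(1 / r1) *\<^sub>R M1 = (1 / r2) *\<^sub>R M2"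
      by auto
    with r have "r1 = r2" "S1 = S2" "M1 = M2" by auto
    with \<open>b\<close> tb show False by (simp add: x1 x2)
  qed
  have "energy_density u ((1 - t) *\<^sub>R x1 + t *\<^sub>R x2) =
      r * u ((1 / r) *\<^sub>R ((1 - t) *\<^sub>R (1, S1) + t *\<^sub>R (1, S2)))
      + 1 / 2 * (r * inner ((1 / r) *\<^sub>R ((1 - t) *\<^sub>R M1 + t *\<^sub>R M2)) ((1 / r) *\<^sub>R ((1 - t) *\<^sub>R M1 + t *\<^sub>R M2)))"
    using \<open>r > 0\<close> by (subst energy_density_eq_perspectives) (simp_all add: x1 x2 r_def algebra_simps)
  moreover have "(1 - t) * energy_density u x1 + t * energy_density u x2 =
      ((1 - t) * (r1 * u ((1 / r1) *\<^sub>R (1, S1))) + t * (r2 * u ((1 / r2) *\<^sub>R (1, S2))))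
      + 1 / 2 * ((1 - t) * (r1 * inner ((1 / r1) *\<^sub>R M1) ((1 / r1) *\<^sub>R M1))
        + t * (r2 * inner ((1 / r2) *\<^sub>R M2) ((1 / r2) *\<^sub>R M2)))"
    using r by (simp add: energy_density_eq_perspectives x1 x2 field_simps)
  ultimately show "le_strict_if b (energy_density u ((1 - t) *\<^sub>R x1 + t *\<^sub>R x2))
      ((1 - t) * energy_density u x1 + t * energy_density u x2)"
    using le_strict_if_add[OF internal kinetic strict] by simp
qed

lemma convex_on_strict_if_of_energy_density:
  assumes E: "convex_on_strict_if b state_domain (energy_density u)"
  shows "convex_on_strict_if b D u"
  unfolding convex_on_strict_if_def
proof (intro conjI convex_D ballI allI impI)
  fix z1 z2 and t :: real assume z: "z1 \<in> D" "z2 \<in> D" and tb: "0 < t \<and> t < 1 \<and> (b \<longrightarrow> z1 \<noteq> z2)"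
  have t: "0 < t" "t < 1" using tb by auto
  have v: "fst z1 > 0" "fst z2 > 0" using z D_pos by auto
  define r where "r = (1 - t) * fst z1 + t * fst z2"
  define m where "m = t * fst z2 / r"
  note P = perspective_weights[OF v less_imp_le[OF t(1)] less_imp_le[OF t(2)], folded r_def, folded m_def]
  have m: "0 < m" "m < 1" using P(7)[OF t] by auto
  text \<open>The point of \<open>state_domain\<close> with zero momentum over \<open>p \<in> D\<close>; there \<open>energy_density u = u p / fst p\<close>.\<close>
  define X where "X = (\<lambda>p::real \<times> real. (1 / fst p) *\<^sub>R ((1::real), (0::real^3), snd p))"
  have state_X: "specific_state (X p) = p" if "fst p > 0" for p
    using that by (simp add: X_def specific_state_def prod_eq_iff)
  have X_mem: "X p \<in> state_domain" if "p \<in> D" for p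
    using that D_pos state_X[of p] by (auto simp: state_domain_def X_def)
  have energy_X: "energy_density u (X p) = (1 / fst p) * u p" if "fst p > 0" for p
    using that state_X[OF that] by (simp add: energy_density_def X_def)
  define z where "z = (1 - t) *\<^sub>R z1 + t *\<^sub>R z2"
  have "fst z = r" by (simp add: z_def r_def)
  have comb: "(1 - m) *\<^sub>R X z1 + m *\<^sub>R X z2 = X z"
  proof -
    have "(1 - t) *\<^sub>R ((1::real), (0::real^3), snd z1) + t *\<^sub>R (1, 0, snd z2) = (1, 0, snd z)"
      by (simp add: z_def algebra_simps)
    then show ?thesis
      unfolding X_def using P(6)[of "((1::real), (0::real^3), snd z1)" "(1, 0, snd z2)"] \<open>fst z = r\<close> by simp
  qed
  have "b \<longrightarrow> X z1 \<noteq> X z2" using tb state_X v by metis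
  with E X_mem z m have "le_strict_if b (energy_density u ((1 - m) *\<^sub>R X z1 + m *\<^sub>R X z2))
      ((1 - m) * energy_density u (X z1) + m * energy_density u (X z2))"
    unfolding convex_on_strict_if_def by blast
  moreover have "(1 - m) * energy_density u (X z1) + m * energy_density u (X z2) = (1 / r) * ((1 - t) * u z1 + t * u z2)"
  proof -
    have weights: "(1 - m) / fst z1 = (1 - t) / r" "m / fst z2 = t / r"
      using P(1,4,5) v by (simp_all add: field_simps)
    have "(1 - m) * energy_density u (X z1) + m * energy_density u (X z2)
        = ((1 - m) / fst z1) * u z1 + (m / fst z2) * u z2"
      by (simp add: energy_X v)
    also have "\<dots> = (1 / r) * ((1 - t) * u z1 + t * u z2)"
      unfolding weights using P(1) by (simp add: field_simps)
    finally show ?thesis .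
  qed
  ultimately have "le_strict_if b ((1 / r) * u z) ((1 / r) * ((1 - t) * u z1 + t * u z2))"
    unfolding comb using energy_X P(1) \<open>fst z = r\<close> by simp
  then show "le_strict_if b (u ((1 - t) *\<^sub>R z1 + t *\<^sub>R z2)) ((1 - t) * u z1 + t * u z2)"
    using le_strict_if_mult_left_iff[of "1 / r"] P(1) by (simp add: z_def)
qed

lemma energy_density_strict_mono_entropy:
  assumes "x \<in> state_domain" "x' \<in> state_domain" "fst x = fst x'" "fst (snd x) = fst (snd x')"
    and "snd (snd x) < snd (snd x')"
  shows "energy_density u x < energy_density u x'"
proof -
  have r: "fst x > 0" and "specific_state x \<in> D" "specific_state x' \<in> D"
    using assms by (auto simp: state_domain_def)
  then have "u (specific_state x) < u (specific_state x')"
    using u_strict_mono_entropy[of "inverse (fst x)" "snd (snd x) * inverse (fst x)" "snd (snd x') * inverse (fst x)"]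
      assms(3,5) by (simp add: specific_state_def)
  then show ?thesis using r assms(3,4) by (simp add: energy_density_def)
qed

lemma energy_density_le_strict_if_iff:
  assumes "x \<in> state_domain" "x' \<in> state_domain" "fst x = fst x'" "fst (snd x) = fst (snd x')"
  shows "le_strict_if b (energy_density u x) (energy_density u x') \<longleftrightarrow> le_strict_if b (snd (snd x)) (snd (snd x'))"
proof -
  have "snd (snd x) = snd (snd x') \<Longrightarrow> x = x'" using assms(3,4) by (simp add: prod_eq_iff)
  then show ?thesis
    using energy_density_strict_mono_entropy[OF assms] energy_density_strict_mono_entropy[OF assms(2,1) assms(3,4)[symmetric]]
    unfolding le_strict_if_def by (cases b) (auto, (metis less_le not_less)+)
qed

lemma energy_density_comb_iff_Sbar_comb:
  assumes x: "x1 \<in> state_domain" "x2 \<in> state_domain" and t: "0 \<le> t" "t \<le> 1"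
    and q: "(1 - t) *\<^sub>R to_conserved x1 + t *\<^sub>R to_conserved x2 \<in> Omega D u"
  shows "le_strict_if b (energy_density u ((1 - t) *\<^sub>R x1 + t *\<^sub>R x2)) ((1 - t) * energy_density u x1 + t * energy_density u x2)
    \<longleftrightarrow> le_strict_if b (- Sbar D u ((1 - t) *\<^sub>R to_conserved x1 + t *\<^sub>R to_conserved x2))
          ((1 - t) * - Sbar D u (to_conserved x1) + t * - Sbar D u (to_conserved x2))"
proof -
  define x where "x = (1 - t) *\<^sub>R x1 + t *\<^sub>R x2"
  define y where "y = from_conserved ((1 - t) *\<^sub>R to_conserved x1 + t *\<^sub>R to_conserved x2)"
  have "x \<in> state_domain" using convex_state_domain x t by (simp add: x_def convex_alt)
  have "y \<in> state_domain" unfolding y_def by (rule from_conserved_mem[OF q])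
  have "to_conserved y = (1 - t) *\<^sub>R to_conserved x1 + t *\<^sub>R to_conserved x2"
    unfolding y_def by (rule to_from_conserved[OF q])
  from arg_cong[OF this, of "\<lambda>p. snd (snd p)"]
  have "(1 - t) * energy_density u x1 + t * energy_density u x2 = energy_density u y"
    by (simp add: to_conserved_def)
  then have "le_strict_if b (energy_density u x) ((1 - t) * energy_density u x1 + t * energy_density u x2)
      \<longleftrightarrow> le_strict_if b (energy_density u x) (energy_density u y)"
    by simp
  also have "\<dots> \<longleftrightarrow> le_strict_if b (snd (snd x)) (snd (snd y))"
    by (rule energy_density_le_strict_if_iff[OF \<open>x \<in> state_domain\<close> \<open>y \<in> state_domain\<close>])
      (simp_all add: x_def y_def from_conserved_def to_conserved_def)
  also have "\<dots> \<longleftrightarrow> le_strict_if b ((1 - t) * Sbar D u (to_conserved x1) + t * Sbar D u (to_conserved x2))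
      (Sbar D u ((1 - t) *\<^sub>R to_conserved x1 + t *\<^sub>R to_conserved x2))"
    by (simp add: x_def y_def from_conserved_def Sbar_to_conserved x)
  also have "\<dots> \<longleftrightarrow> le_strict_if b (- Sbar D u ((1 - t) *\<^sub>R to_conserved x1 + t *\<^sub>R to_conserved x2))
      ((1 - t) * - Sbar D u (to_conserved x1) + t * - Sbar D u (to_conserved x2))"
  proof -
    have "(1 - t) * - A + t * - B = - ((1 - t) * A + t * B)" for A B :: real by simp
    then show ?thesis by (simp only: le_strict_if_minus_iff)
  qed
  finally show ?thesis by (simp only: x_def)
qed

lemma convex_energy_density_iff_concave_Sbar:
  assumes "convex (Omega D u)"
  shows "convex_on_strict_if b state_domain (energy_density u) \<longleftrightarrow> convex_on_strict_if b (Omega D u) (\<lambda>q. - Sbar D u q)"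
proof
  assume E: "convex_on_strict_if b state_domain (energy_density u)"
  show "convex_on_strict_if b (Omega D u) (\<lambda>q. - Sbar D u q)"
    unfolding convex_on_strict_if_def
  proof (intro conjI assms ballI allI impI)
    fix q1 q2 and t :: real
    assume q: "q1 \<in> Omega D u" "q2 \<in> Omega D u" and tb: "0 < t \<and> t < 1 \<and> (b \<longrightarrow> q1 \<noteq> q2)"
    then obtain x1 x2 where x: "x1 \<in> state_domain" "x2 \<in> state_domain" "q1 = to_conserved x1" "q2 = to_conserved x2"
      unfolding Omega_eq_image by blast
    have "b \<longrightarrow> x1 \<noteq> x2" using tb x(3,4) by auto
    with tb E x(1,2) have "le_strict_if b (energy_density u ((1 - t) *\<^sub>R x1 + t *\<^sub>R x2))
        ((1 - t) * energy_density u x1 + t * energy_density u x2)"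
      unfolding convex_on_strict_if_def by blast
    moreover have "(1 - t) *\<^sub>R q1 + t *\<^sub>R q2 \<in> Omega D u"
      using assms q tb by (simp add: convex_alt)
    ultimately show "le_strict_if b (- Sbar D u ((1 - t) *\<^sub>R q1 + t *\<^sub>R q2)) ((1 - t) * - Sbar D u q1 + t * - Sbar D u q2)"
      using energy_density_comb_iff_Sbar_comb[OF x(1,2)] tb x(3,4) by simp
  qed
next
  assume S: "convex_on_strict_if b (Omega D u) (\<lambda>q. - Sbar D u q)"
  show "convex_on_strict_if b state_domain (energy_density u)"
    unfolding convex_on_strict_if_def
  proof (intro conjI convex_state_domain ballI allI impI)
    fix x1 x2 and t :: real
    assume x: "x1 \<in> state_domain" "x2 \<in> state_domain" and tb: "0 < t \<and> t < 1 \<and> (b \<longrightarrow> x1 \<noteq> x2)"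
    have q: "to_conserved x1 \<in> Omega D u" "to_conserved x2 \<in> Omega D u"
      using to_conserved_mem x by auto
    have "b \<longrightarrow> to_conserved x1 \<noteq> to_conserved x2"
      using tb from_to_conserved[OF x(1)] from_to_conserved[OF x(2)] by auto
    with tb S q have "le_strict_if b (- Sbar D u ((1 - t) *\<^sub>R to_conserved x1 + t *\<^sub>R to_conserved x2))
        ((1 - t) * - Sbar D u (to_conserved x1) + t * - Sbar D u (to_conserved x2))"
      unfolding convex_on_strict_if_def by blast
    moreover have "(1 - t) *\<^sub>R to_conserved x1 + t *\<^sub>R to_conserved x2 \<in> Omega D u"
      using assms q tb by (simp add: convex_alt)
    ultimately show "le_strict_if b (energy_density u ((1 - t) *\<^sub>R x1 + t *\<^sub>R x2))
        ((1 - t) * energy_density u x1 + t * energy_density u x2)"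
      using energy_density_comb_iff_Sbar_comb[OF x] tb by simp
  qed
qed

theorem convex_iff_concave_Sbar:
  assumes "convex (Ds D u)"
  shows "(strict_convex_on D u \<longleftrightarrow> strict_concave_on (Omega D u) (Sbar D u))
    \<and> (convex_on D u \<longleftrightarrow> concave_on (Omega D u) (Sbar D u))"
proof -
  have "convex_on_strict_if b D u \<longleftrightarrow> convex_on_strict_if b state_domain (energy_density u)" for b
    by (rule iffI) (erule convex_on_strict_if_energy_density, erule convex_on_strict_if_of_energy_density)
  also have "\<dots> b \<longleftrightarrow> convex_on_strict_if b (Omega D u) (\<lambda>q. - Sbar D u q)" for b
    by (rule convex_energy_density_iff_concave_Sbar[OF convex_Omega[OF assms]])
  finally have "convex_on_strict_if b D u \<longleftrightarrow> convex_on_strict_if b (Omega D u) (\<lambda>q. - Sbar D u q)" for b .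
  from this[of True] this[of False] show ?thesis
    by (simp add: convex_on_strict_if_True convex_on_strict_if_False strict_concave_on_def concave_on_def)
qed

end

theorem mainTheorem9:
  fixes D :: "(real \<times> real) set" and u :: "real \<times> real \<Rightarrow> real"
  assumes "open D" and "convex D" and "D \<noteq> {}"
    and "D \<subseteq> {p. fst p > 0}"
    and "C2_on D u"
    and "\<forall>p\<in>D. blinfun_apply (frechet_D u p) (0, 1) > 0"
  shows "((\<forall>p\<in>D. hess_pos_def u p) \<longleftrightarrow> (\<forall>q\<in>Omega D u. hess_neg_def (Sbar D u) q))
     \<and> (convex (Ds D u) \<longrightarrow>
          (strict_convex_on D u \<longleftrightarrow> strict_concave_on (Omega D u) (Sbar D u))
        \<and> (convex_on D u \<longleftrightarrow> concave_on (Omega D u) (Sbar D u)))"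
proof -
  interpret internal_energy D u using assms by unfold_locales auto
  show ?thesis by (intro conjI impI hess_pos_def_iff_hess_neg_def convex_iff_concave_Sbar)
qed

end
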